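(* Let $\nu,\eta$ be two probability distributions on $[0,\infty)$, assume $\nu$ is a class (ii) distribution with associated functions $f,\varphi,\Phi$, and let $\theta>1$. Then $D_{F_\Phi}(\eta|\nu)<\infty$ implies $D_{KL}(\eta|\nu)<\infty$. Moreover, $D_{F_\Phi}(\eta|\nu)<\infty$ whenever $D_\alpha(\eta|\nu)<\infty$ for some $\alpha>1$.
   Context: Densities are written $f=e^{-\varphi}$, $g=e^{-\gamma}$. For a strictly convex $F$ with $F(1)=0$, $D_F(\eta|\nu)=\int_0^\infty F(g/f)f\,dx$ if $\eta\ll\nu$ and $+\infty$ otherwise; $D_{KL}$ corresponds to $F(y)=y\log y$ and $D_\alpha$ ($\alpha>1$) to $F(y)=\frac{y^\alpha-1}{\alpha(\alpha-1)}$. Class (ii): $\lim_{x\to\infty}\varphi(x)/x=0$, $\lim_{x\to\infty}\varphi(x)/\log x=\infty$, and there exist $\bar x>0$ and $\Phi:\mathbb R_+\to\mathbb R$ positive, strictly concave, twice differentiable and increasing on $[\bar x,\infty)$ such that, with $\Phi^{-1}$ the inverse of $\Phi|_{[\bar x,\infty)}$, $0<\liminf_{x\to\infty}\Phi^{-1}(\varphi(x))/x\le\limsup_{x\to\infty}\Phi^{-1}(\varphi(x))/x<\infty$. With $\bar y=\exp(\Phi(\bar x))$: $F_\Phi(y)=y\log y$ for $y\le\bar y$ and $F_\Phi(y)=a\,y\,\Phi^{-1}(\log y)^\theta+b$ for $y>\bar y$, where $a=\frac{1+\log\bar y}{\Phi^{-1}(\log\bar y)^\theta+\theta\Phi^{-1}(\log\bar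 y)^{\theta-1}(\Phi^{-1})'(\log\bar y)}$, $b=\bar y\log\bar y-a\bar y\Phi^{-1}(\log\bar y)^\theta$. *)

theory Defs
  imports "HOL-Probability.Probability"
begin

definition dens_of :: "(real \<Rightarrow> real) \<Rightarrow> real \<Rightarrow> real" where
  "dens_of \<phi> x = exp (- \<phi> x)"

definition nu_of :: "(real \<Rightarrow> real) \<Rightarrow> real measure" where
  "nu_of \<phi> = density lborel (\<lambda>x. ennreal (indicator {0..} x * dens_of \<phi> x))"

text \<open>F-divergence D_F(eta|nu) with nu having Lebesgue density f on [0,infinity).
  g is the Lebesgue density of eta. The value is +infinity if eta is not absolutely
  continuous w.r.t. nu, or if the integrand is not integrable (for convex F with F(1)=0
  the negative part is always integrable, so non-integrability means the integral is +infinity).\<close>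
definition fdiv :: "(real \<Rightarrow> real) \<Rightarrow> real measure \<Rightarrow> (real \<Rightarrow> real) \<Rightarrow> ereal" where
  "fdiv F \<eta> f =
     (if absolutely_continuous (density lborel (\<lambda>x. ennreal (indicator {0..} x * f x))) \<eta>
      then (let g = (\<lambda>x. enn2real (RN_deriv lborel \<eta> x)) in
            if set_integrable lborel {0..} (\<lambda>x. F (g x / f x) * f x)
            then ereal (LINT x:{0..}|lborel. F (g x / f x) * f x)
            else \<infinity>)
      else \<infinity>)"

definition F_KL :: "real \<Rightarrow> real" where
  "F_KL y = y * ln y"

definition F_alpha :: "real \<Rightarrow> real \<Rightarrow> real" where
  "F_alpha \<alpha> y = (y powr \<alpha> - 1) / (\<alpha> * (\<alpha> - 1))"

definition strictly_concave_on :: "real set \<Rightarrow> (real \<Rightarrow> real) \<Rightarrow> bool" where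
  "strictly_concave_on S g \<longleftrightarrow>
     (\<forall>x\<in>S. \<forall>y\<in>S. \<forall>t. x \<noteq> y \<and> 0 < t \<and> t < 1 \<longrightarrow>
        g (t * x + (1 - t) * y) > t * g x + (1 - t) * g y)"

definition Phi_inv :: "(real \<Rightarrow> real) \<Rightarrow> real \<Rightarrow> real \<Rightarrow> real" where
  "Phi_inv \<Phi> xb = the_inv_into {xb..} \<Phi>"

definition class_ii :: "(real \<Rightarrow> real) \<Rightarrow> (real \<Rightarrow> real) \<Rightarrow> real \<Rightarrow> bool" where
  "class_ii \<phi> \<Phi> xb \<longleftrightarrow>
     ((\<lambda>x. \<phi> x / x) \<longlongrightarrow> 0) at_top \<and>
     filterlim (\<lambda>x. \<phi> x / ln x) at_top at_top \<and>
     xb > 0 \<and>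
     (\<forall>x\<ge>xb. \<Phi> x > 0) \<and>
     strictly_concave_on {xb..} \<Phi> \<and>
     (\<exists>\<Phi>' \<Phi>''. \<forall>x\<ge>xb. (\<Phi> has_real_derivative \<Phi>' x) (at x within {xb..}) \<and>
                         (\<Phi>' has_real_derivative \<Phi>'' x) (at x within {xb..})) \<and>
     strict_mono_on {xb..} \<Phi> \<and>
     (\<forall>\<^sub>F x in at_top. \<phi> x \<in> \<Phi> ` {xb..}) \<and>
     0 < Liminf at_top (\<lambda>x. ereal (Phi_inv \<Phi> xb (\<phi> x) / x)) \<and>
     Limsup at_top (\<lambda>x. ereal (Phi_inv \<Phi> xb (\<phi> x) / x)) < \<infinity>"

definition F_Phi :: "(real \<Rightarrow> real) \<Rightarrow> real \<Rightarrow> real \<Rightarrow> real \<Rightarrow> real" where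
  "F_Phi \<Phi> xb \<theta> y =
     (let yb = exp (\<Phi> xb);
          Pinv = Phi_inv \<Phi> xb;
          dPinv = (THE D. (Pinv has_real_derivative D) (at (ln yb) within \<Phi> ` {xb..}));
          a = (1 + ln yb) /
              (Pinv (ln yb) powr \<theta> + \<theta> * Pinv (ln yb) powr (\<theta> - 1) * dPinv);
          b = yb * ln yb - a * yb * Pinv (ln yb) powr \<theta>
      in if y \<le> yb then y * ln y else a * y * Pinv (ln y) powr \<theta> + b)"

end

theory Submission
  imports Defs
begin

text \<open>Write \<open>P\<close> for the inverse of \<open>\<Phi>\<close> on \<open>[xb, \<infinity>)\<close>. Beyond \<open>exp (\<Phi> xb)\<close> the function
  \<open>F_Phi\<close> is \<open>a y P(ln y)^\<theta> + b\<close> with \<open>a > 0\<close>. A concave \<open>\<Phi>\<close> grows at most linearly, so \<open>P\<close>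
  grows at least linearly and \<open>y ln y\<close> is bounded by an affine combination of \<open>y\<close> and
  \<open>F_Phi y\<close>. Conversely, \<open>\<phi> x \<ge> M ln x\<close> and \<open>P(\<phi> x) = O(x)\<close> give \<open>P(t) = O(exp (t/M))\<close>, hence
  \<open>F_Phi y = O(y^(1 + \<theta>/M))\<close>, which is \<open>O(y^\<alpha>)\<close> for \<open>M = \<theta>/(\<alpha> - 1)\<close>. A pointwise bound
  \<open>|F y| \<le> c\<^sub>1 + c\<^sub>2 y + c\<^sub>3 |G y|\<close> transfers finiteness of \<open>D_G\<close> to \<open>D_F\<close>, because the
  densities \<open>f\<close> and \<open>g\<close> are integrable.\<close>

definition affinely_dominated :: "(real \<Rightarrow> real) \<Rightarrow> (real \<Rightarrow> real) \<Rightarrow> bool" where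
  "affinely_dominated F G \<longleftrightarrow>
     (\<exists>c1 c2 c3. c1 \<ge> 0 \<and> c2 \<ge> 0 \<and> c3 \<ge> 0 \<and> (\<forall>y\<ge>0. \<bar>F y\<bar> \<le> c1 + c2 * y + c3 * \<bar>G y\<bar>))"

lemma affinely_dominatedI:
  assumes "c1 \<ge> 0" "c2 \<ge> 0" "c3 \<ge> 0" "\<And>y. y \<ge> 0 \<Longrightarrow> \<bar>F y\<bar> \<le> c1 + c2 * y + c3 * \<bar>G y\<bar>"
  shows "affinely_dominated F G"
  unfolding affinely_dominated_def using assms by blast

lemma affinely_dominated_trans:
  assumes "affinely_dominated F G" "affinely_dominated G H"
  shows "affinely_dominated F H"
proof -
  obtain c1 c2 c3 where c: "c1 \<ge> 0" "c2 \<ge> 0" "c3 \<ge> 0"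
    and F: "\<And>y. y \<ge> 0 \<Longrightarrow> \<bar>F y\<bar> \<le> c1 + c2 * y + c3 * \<bar>G y\<bar>"
    using assms(1) unfolding affinely_dominated_def by blast
  obtain d1 d2 d3 where d: "d1 \<ge> 0" "d2 \<ge> 0" "d3 \<ge> 0"
    and G: "\<And>y. y \<ge> 0 \<Longrightarrow> \<bar>G y\<bar> \<le> d1 + d2 * y + d3 * \<bar>H y\<bar>"
    using assms(2) unfolding affinely_dominated_def by blast
  show ?thesis
  proof (rule affinely_dominatedI)
    fix y :: real assume y: "y \<ge> 0"
    have "c3 * \<bar>G y\<bar> \<le> c3 * (d1 + d2 * y + d3 * \<bar>H y\<bar>)"
      using G[OF y] c by (intro mult_left_mono)
    then show "\<bar>F y\<bar> \<le> (c1 + c3 * d1) + (c2 + c3 * d2) * y + (c3 * d3) * \<bar>H y\<bar>"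
      using F[OF y] by (simp add: algebra_simps)
  qed (use c d in auto)
qed

lemma integrable_RN_deriv_lborel:
  assumes ac: "absolutely_continuous lborel \<eta>"
    and prob: "prob_space \<eta>" and sets: "sets \<eta> = sets borel"
  shows "integrable lborel (\<lambda>x. enn2real (RN_deriv lborel \<eta> x))"
proof -
  have "(\<integral>\<^sup>+x. RN_deriv lborel \<eta> x \<partial>lborel) = emeasure \<eta> (space \<eta>)"
    using sigma_finite_measure.RN_deriv_nn_integral[OF sigma_finite_lborel ac, of "\<lambda>_. 1"] sets
    by simp
  also have "\<dots> = 1"
    using prob by (rule prob_space.emeasure_space_1)
  finally have "(\<integral>\<^sup>+x. ennreal (enn2real (RN_deriv lborel \<eta> x)) \<partial>lborel) \<le> 1"
    by (metis (no_types, lifting) ennreal_enn2real_if nn_integral_mono order_refl top_greatest)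
  then show ?thesis
    by (intro integrableI_nonneg) (auto simp: le_less_trans)
qed

lemma fdiv_less_infinity_if_affinely_dominated:
  fixes F G f :: "real \<Rightarrow> real"
  assumes fin: "fdiv G \<eta> f < \<infinity>" and dom: "affinely_dominated F G"
    and Fm: "F \<in> borel_measurable borel" and fm: "f \<in> borel_measurable borel"
    and fpos: "\<And>x. f x > 0" and fint: "set_integrable lborel {0..} f"
    and prob: "prob_space \<eta>" and sets: "sets \<eta> = sets borel"
  shows "fdiv F \<eta> f < \<infinity>"
proof -
  define g where "g x = enn2real (RN_deriv lborel \<eta> x)" for x
  obtain c1 c2 c3 where c: "c1 \<ge> 0" "c2 \<ge> 0" "c3 \<ge> 0"
    and bnd: "\<And>y. y \<ge> 0 \<Longrightarrow> \<bar>F y\<bar> \<le> c1 + c2 * y + c3 * \<bar>G y\<bar>"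
    using dom unfolding affinely_dominated_def by blast
  have ac: "absolutely_continuous (density lborel (\<lambda>x. ennreal (indicator {0..} x * f x))) \<eta>"
    using fin unfolding fdiv_def by (auto split: if_splits)
  then have "absolutely_continuous lborel \<eta>"
    using absolutely_continuousI_density[of "\<lambda>x. ennreal (indicator {0..} x * f x)" lborel] fm
    unfolding absolutely_continuous_def by auto
  then have "integrable lborel g"
    unfolding g_def using prob sets by (rule integrable_RN_deriv_lborel)
  then have g_int: "set_integrable lborel {0..} g"
    unfolding set_integrable_def by (intro integrable_mult_indicator) auto
  have G_int: "set_integrable lborel {0..} (\<lambda>x. G (g x / f x) * f x)"
    using fin ac unfolding fdiv_def g_def Let_def by (auto split: if_splits)
  define h where "h x = c1 * f x + c2 * g x + c3 * \<bar>G (g x / f x) * f x\<bar>" for x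
  have h_int: "set_integrable lborel {0..} h"
    unfolding h_def using fint g_int G_int
    by (intro set_integral_add set_integrable_mult_right set_integrable_abs) auto
  have F_le_h: "\<bar>F (g x / f x) * f x\<bar> \<le> h x" for x
  proof -
    have "\<bar>F (g x / f x) * f x\<bar> = \<bar>F (g x / f x)\<bar> * f x"
      using fpos[of x] by (simp add: abs_mult)
    also have "\<dots> \<le> (c1 + c2 * (g x / f x) + c3 * \<bar>G (g x / f x)\<bar>) * f x"
      using bnd[of "g x / f x"] fpos[of x] by (intro mult_right_mono) (auto simp: g_def)
    also have "\<dots> = h x"
      using fpos[of x] by (simp add: h_def algebra_simps abs_mult)
    finally show ?thesis .
  qed
  have "set_integrable lborel {0..} (\<lambda>x. F (g x / f x) * f x)"
    using Fm fm F_le_h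
    by (intro set_integrable_bound[OF h_int])
      (auto simp: set_borel_measurable_def g_def intro!: order_trans[OF _ abs_ge_self])
  then show ?thesis
    using ac unfolding fdiv_def g_def Let_def by simp
qed

lemma abs_mult_ln_le: "(y::real) \<ge> 0 \<Longrightarrow> \<bar>y * ln y\<bar> \<le> 1 + y * y"
proof (cases "y \<le> 1")
  case True
  assume y: "y \<ge> 0"
  have "- (y * ln y) \<le> 1 - y"
  proof (cases "y = 0")
    case False
    then have "ln (1 / y) \<le> 1 / y - 1"
      using y by (intro ln_le_minus_one) auto
    then have "y * (- ln y) \<le> y * (1 / y - 1)"
      using y False by (intro mult_left_mono) (auto simp: ln_div)
    then show ?thesis
      using False by (simp add: algebra_simps)
  qed simp
  moreover have "y * ln y \<le> 0"
    using True y by (cases "y = 0") (auto intro: mult_nonneg_nonpos)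
  ultimately show ?thesis
    using y mult_nonneg_nonneg[OF y y] by (subst abs_of_nonpos) linarith+
next
  case False
  then have "0 \<le> y * ln y" "y * ln y \<le> y * y"
    using ln_le_minus_one[of y] by (auto intro: mult_left_mono)
  then show ?thesis by simp
qed

lemma powr_affinely_dominated_F_alpha:
  assumes "\<alpha> > 1"
  shows "affinely_dominated (\<lambda>y. y powr \<alpha>) (F_alpha \<alpha>)"
proof (rule affinely_dominatedI)
  fix y :: real
  have "y powr \<alpha> = 1 + \<alpha> * (\<alpha> - 1) * F_alpha \<alpha> y"
    using assms unfolding F_alpha_def by (simp add: field_simps)
  also have "\<dots> \<le> 1 + 0 * y + \<alpha> * (\<alpha> - 1) * \<bar>F_alpha \<alpha> y\<bar>"
    using assms by simp
  finally show "\<bar>y powr \<alpha>\<bar> \<le> 1 + 0 * y + \<alpha> * (\<alpha> - 1) * \<bar>F_alpha \<alpha> y\<bar>" by simp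
qed (use assms in auto)

text \<open>The slope \<open>D0\<close> of \<open>\<Phi>\<close> at \<open>xb\<close> enters only through the coefficient \<open>a\<close> of \<open>F_Phi\<close>, which
  involves the derivative \<open>1 / D0\<close> of \<open>Phi_inv \<Phi> xb\<close> at \<open>\<Phi> xb\<close>.\<close>

locale concave_profile =
  fixes \<Phi> :: "real \<Rightarrow> real" and xb D0 :: real
  assumes xb_pos: "xb > 0"
    and Phi_xb_pos: "\<Phi> xb > 0"
    and strictly_concave: "strictly_concave_on {xb..} \<Phi>"
    and strict_mono: "strict_mono_on {xb..} \<Phi>"
    and continuous: "continuous_on {xb..} \<Phi>"
    and unbounded: "\<And>t. \<exists>x\<ge>xb. t \<le> \<Phi> x"
    and has_deriv_xb: "(\<Phi> has_real_derivative D0) (at xb within {xb..})"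
begin

abbreviation Pinv :: "real \<Rightarrow> real" where "Pinv \<equiv> Phi_inv \<Phi> xb"

abbreviation t0 :: real where "t0 \<equiv> \<Phi> xb"

lemma Phi_le_iff: "x \<ge> xb \<Longrightarrow> y \<ge> xb \<Longrightarrow> \<Phi> x \<le> \<Phi> y \<longleftrightarrow> x \<le> y"
  using strict_mono_on_less_eq[OF strict_mono] by simp

lemma Phi_less_iff: "x \<ge> xb \<Longrightarrow> y \<ge> xb \<Longrightarrow> \<Phi> x < \<Phi> y \<longleftrightarrow> x < y"
  using strict_mono_on_less[OF strict_mono] by simp

lemma image_Phi: "\<Phi> ` {xb..} = {t0..}"
proof
  show "\<Phi> ` {xb..} \<subseteq> {t0..}"
    using Phi_le_iff by auto
  show "{t0..} \<subseteq> \<Phi> ` {xb..}"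
  proof
    fix t assume t: "t \<in> {t0..}"
    obtain b where b: "b \<ge> xb" "t \<le> \<Phi> b"
      using unbounded by blast
    have "continuous_on {xb..b} \<Phi>"
      using continuous by (rule continuous_on_subset) auto
    then obtain x where "xb \<le> x" "x \<le> b" "\<Phi> x = t"
      using IVT'[of \<Phi> xb t b] t b by auto
    then show "t \<in> \<Phi> ` {xb..}" by auto
  qed
qed

lemma inj_on_Phi: "inj_on \<Phi> {xb..}"
  using strict_mono strict_mono_on_imp_inj_on by blast

lemma Pinv_Phi: "x \<ge> xb \<Longrightarrow> Pinv (\<Phi> x) = x"
  unfolding Phi_inv_def using the_inv_into_f_f[OF inj_on_Phi] by simp

lemma Phi_Pinv: "t \<ge> t0 \<Longrightarrow> \<Phi> (Pinv t) = t"
  unfolding Phi_inv_def using f_the_inv_into_f[OF inj_on_Phi] image_Phi by simp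

lemma Pinv_ge: "t \<ge> t0 \<Longrightarrow> Pinv t \<ge> xb"
  unfolding Phi_inv_def using the_inv_into_into[OF inj_on_Phi, of t "{xb..}"] image_Phi by auto

lemma Pinv_le: "t \<ge> t0 \<Longrightarrow> y \<ge> xb \<Longrightarrow> t \<le> \<Phi> y \<Longrightarrow> Pinv t \<le> y"
  using Phi_le_iff[OF Pinv_ge, of t y] Phi_Pinv by auto

lemma Pinv_mono: "t0 \<le> s \<Longrightarrow> s \<le> t \<Longrightarrow> Pinv s \<le> Pinv t"
  using Pinv_le[of s "Pinv t"] Pinv_ge Phi_Pinv by auto

definition unit_slope :: real where "unit_slope = \<Phi> (xb + 1) - \<Phi> xb"

lemma unit_slope_pos: "unit_slope > 0"
  unfolding unit_slope_def using Phi_less_iff[of xb "xb + 1"] by simp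

lemma Phi_le_chord:
  assumes "x \<ge> xb + 1"
  shows "\<Phi> x \<le> \<Phi> xb + unit_slope * (x - xb)"
proof (cases "x = xb + 1")
  case False
  define t where "t = 1 / (x - xb)"
  have t: "0 < t" "t < 1"
    using assms False by (auto simp: t_def field_simps)
  have "t * (x - xb) = 1"
    using assms False by (simp add: t_def)
  then have "t * x + (1 - t) * xb = xb + 1"
    by (simp add: algebra_simps)
  have "\<Phi> (t * x + (1 - t) * xb) > t * \<Phi> x + (1 - t) * \<Phi> xb"
    using strictly_concave t assms False unfolding strictly_concave_on_def by auto
  then have "unit_slope > t * (\<Phi> x - \<Phi> xb)"
    using \<open>t * x + (1 - t) * xb = xb + 1\<close> by (simp add: unit_slope_def algebra_simps)
  then have "unit_slope * (x - xb) > \<Phi> x - \<Phi> xb"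
    using assms by (simp add: t_def field_simps)
  then show ?thesis by simp
qed (simp add: unit_slope_def)

lemma chord_le_Phi:
  assumes "xb < x" "x \<le> xb + 1"
  shows "unit_slope * (x - xb) \<le> \<Phi> x - \<Phi> xb"
proof (cases "x = xb + 1")
  case False
  define t where "t = x - xb"
  have t: "0 < t" "t < 1" "t * (xb + 1) + (1 - t) * xb = x"
    using assms False by (auto simp: t_def algebra_simps)
  have "\<Phi> (t * (xb + 1) + (1 - t) * xb) > t * \<Phi> (xb + 1) + (1 - t) * \<Phi> xb"
    using strictly_concave t assms unfolding strictly_concave_on_def by auto
  then show ?thesis
    using t by (simp add: unit_slope_def t_def algebra_simps)
qed (simp add: unit_slope_def)

lemma Phi_le_affine:
  assumes "x \<ge> xb"
  shows "\<Phi> x \<le> \<Phi> (xb + 1) + unit_slope * x"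
proof (cases "x \<ge> xb + 1")
  case True
  then show ?thesis
    using Phi_le_chord[OF True] unit_slope_pos mult_pos_pos[OF unit_slope_pos xb_pos]
    by (simp add: unit_slope_def algebra_simps)
next
  case False
  then show ?thesis
    using Phi_le_iff[of x "xb + 1"] assms mult_pos_pos[OF unit_slope_pos, of x] xb_pos by simp
qed

lemma difference_quotient_tendsto:
  "((\<lambda>x. (\<Phi> x - \<Phi> xb) / (x - xb)) \<longlongrightarrow> D0) (at_right xb)"
  using has_deriv_xb unfolding has_field_derivative_iff at_within_Ici_at_right .

lemma deriv_xb_pos: "D0 > 0"
proof -
  have "\<forall>\<^sub>F x in at_right xb. unit_slope \<le> (\<Phi> x - \<Phi> xb) / (x - xb)"
    unfolding eventually_at_right_field
    using chord_le_Phi by (intro exI[of _ "xb + 1"]) (auto simp: field_simps)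
  then have "unit_slope \<le> D0"
    using tendsto_lowerbound[OF difference_quotient_tendsto] by simp
  then show ?thesis
    using unit_slope_pos by simp
qed

lemma Pinv_filterlim: "filterlim Pinv (at_right xb) (at_right t0)"
  unfolding filterlim_at
proof
  show "\<forall>\<^sub>F t in at_right t0. Pinv t \<in> {xb<..} \<and> Pinv t \<noteq> xb"
    unfolding eventually_at_right_field
    using Pinv_ge Phi_Pinv by (intro exI[of _ "t0 + 1"]) (fastforce simp: order_le_less)
  show "(Pinv \<longlongrightarrow> xb) (at_right t0)"
  proof (rule order_tendstoI)
    fix a assume "a < xb"
    then show "\<forall>\<^sub>F t in at_right t0. a < Pinv t"
      unfolding eventually_at_right_field using Pinv_ge
      by (intro exI[of _ "t0 + 1"]) (auto intro: less_le_trans)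
  next
    fix b assume b: "xb < b"
    have "Pinv t < b" if "t0 < t" "t < \<Phi> b" for t
      using Phi_le_iff[of b "Pinv t"] Pinv_ge[of t] Phi_Pinv[of t] b that by force
    moreover have "t0 < \<Phi> b"
      using Phi_less_iff[of xb b] b by simp
    ultimately show "\<forall>\<^sub>F t in at_right t0. Pinv t < b"
      unfolding eventually_at_right_field by blast
  qed
qed

lemma Pinv_has_deriv: "(Pinv has_real_derivative 1 / D0) (at t0 within \<Phi> ` {xb..})"
proof -
  have "((\<lambda>t. (\<Phi> (Pinv t) - \<Phi> xb) / (Pinv t - xb)) \<longlongrightarrow> D0) (at_right t0)"
    using filterlim_compose[OF difference_quotient_tendsto Pinv_filterlim] by simp
  then have "((\<lambda>t. inverse ((\<Phi> (Pinv t) - \<Phi> xb) / (Pinv t - xb))) \<longlongrightarrow> 1 / D0) (at_right t0)"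
    using tendsto_inverse deriv_xb_pos by (fastforce simp: inverse_eq_divide)
  moreover have "\<forall>\<^sub>F t in at_right t0.
      inverse ((\<Phi> (Pinv t) - \<Phi> xb) / (Pinv t - xb)) = (Pinv t - Pinv t0) / (t - t0)"
    unfolding eventually_at_right_field using Phi_Pinv Pinv_Phi
    by (intro exI[of _ "t0 + 1"]) auto
  ultimately have "((\<lambda>t. (Pinv t - Pinv t0) / (t - t0)) \<longlongrightarrow> 1 / D0) (at_right t0)"
    using tendsto_cong by fastforce
  then show ?thesis
    unfolding has_field_derivative_iff image_Phi at_within_Ici_at_right .
qed

lemma the_Pinv_deriv: "(THE D. (Pinv has_real_derivative D) (at t0 within \<Phi> ` {xb..})) = 1 / D0"
proof (rule the_equality)
  fix D assume "(Pinv has_real_derivative D) (at t0 within \<Phi> ` {xb..})"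
  then show "D = 1 / D0"
    using has_field_derivative_unique[OF Pinv_has_deriv]
    by (simp add: image_Phi at_within_Ici_at_right)
qed (rule Pinv_has_deriv)

lemma F_Phi_shape:
  assumes "\<theta> \<ge> 0"
  obtains a b where "a > 0"
    and "\<And>y. F_Phi \<Phi> xb \<theta> y =
           (if y \<le> exp t0 then y * ln y else a * y * Pinv (ln y) powr \<theta> + b)"
proof -
  define a where "a = (1 + t0) / (xb powr \<theta> + \<theta> * xb powr (\<theta> - 1) * (1 / D0))"
  have "xb powr \<theta> + \<theta> * xb powr (\<theta> - 1) * (1 / D0) > 0"
    using xb_pos deriv_xb_pos assms by (intro add_pos_nonneg) auto
  then have "a > 0"
    using Phi_xb_pos unfolding a_def by simp
  moreover have "F_Phi \<Phi> xb \<theta> y =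
      (if y \<le> exp t0 then y * ln y
       else a * y * Pinv (ln y) powr \<theta> + (exp t0 * t0 - a * exp t0 * xb powr \<theta>))" for y
    unfolding F_Phi_def Let_def a_def using the_Pinv_deriv Pinv_Phi by simp
  ultimately show ?thesis using that by blast
qed

lemma F_Phi_measurable:
  assumes "\<theta> \<ge> 0"
  shows "F_Phi \<Phi> xb \<theta> \<in> borel_measurable borel"
proof -
  obtain a b where F: "\<And>y. F_Phi \<Phi> xb \<theta> y =
      (if y \<le> exp t0 then y * ln y else a * y * Pinv (ln y) powr \<theta> + b)"
    using F_Phi_shape[OF assms] by blast
  define h where "h y = Pinv (ln (max y (exp t0)))" for y
  have "mono h"
  proof (rule monoI)
    fix s t :: real assume "s \<le> t"
    have pos: "0 < max u (exp t0)" for u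
      by (rule less_le_trans[OF exp_gt_zero max.cobounded2])
    have "t0 \<le> ln (max s (exp t0))"
      using ln_ge_iff[OF pos] by simp
    moreover have "ln (max s (exp t0)) \<le> ln (max t (exp t0))"
      using ln_le_cancel_iff[OF pos pos] \<open>s \<le> t\<close> by (simp add: max.coboundedI1)
    ultimately show "h s \<le> h t"
      unfolding h_def by (rule Pinv_mono)
  qed
  then have "h \<in> borel_measurable borel"
    by (rule borel_measurable_mono)
  moreover have "F_Phi \<Phi> xb \<theta> = (\<lambda>y. if y \<le> exp t0 then y * ln y else a * y * h y powr \<theta> + b)"
    by (auto simp: F h_def max_def)
  ultimately show ?thesis
    by simp
qed

lemma F_KL_affinely_dominated_F_Phi:
  assumes "\<theta> \<ge> 1"
  shows "affinely_dominated F_KL (F_Phi \<Phi> xb \<theta>)"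
proof -
  obtain a b where a: "a > 0" and F: "\<And>y. F_Phi \<Phi> xb \<theta> y =
      (if y \<le> exp t0 then y * ln y else a * y * Pinv (ln y) powr \<theta> + b)"
    using F_Phi_shape assms by (metis order.trans zero_le_one)
  define s where "s = unit_slope"
  have s: "s > 0"
    unfolding s_def by (rule unit_slope_pos)
  show ?thesis
  proof (rule affinely_dominatedI)
    fix y :: real assume y: "y \<ge> 0"
    show "\<bar>F_KL y\<bar> \<le> s * \<bar>b\<bar> / a + \<bar>\<Phi> (xb + 1) + s\<bar> * y + (1 + s / a) * \<bar>F_Phi \<Phi> xb \<theta> y\<bar>"
    proof (cases "y \<le> exp t0")
      case True
      then have "\<bar>F_KL y\<bar> = \<bar>F_Phi \<Phi> xb \<theta> y\<bar>"
        by (simp add: F F_KL_def)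
      moreover have "0 \<le> s * \<bar>b\<bar> / a + \<bar>\<Phi> (xb + 1) + s\<bar> * y + s / a * \<bar>F_Phi \<Phi> xb \<theta> y\<bar>"
        using a s y by simp
      ultimately show ?thesis
        by (simp add: algebra_simps)
    next
      case False
      then have "exp t0 < y"
        by simp
      moreover have "y > 0"
        using \<open>exp t0 < y\<close> exp_gt_zero[of t0] by linarith
      ultimately have "ln y > t0"
        using ln_less_cancel_iff[of "exp t0" y] by simp
      define P where "P = Pinv (ln y)"
      have P: "P \<ge> xb" "\<Phi> P = ln y"
        using Pinv_ge Phi_Pinv \<open>ln y > t0\<close> unfolding P_def by auto
      have "P - 1 \<le> P powr \<theta>"
      proof (cases "P \<ge> 1")
        case True
        then show ?thesis
          using powr_mono[of 1 \<theta> P] assms by simp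
      qed (use powr_ge_zero[of P \<theta>] in linarith)
      then have "ln y \<le> (\<Phi> (xb + 1) + s) + s * P powr \<theta>"
        using Phi_le_affine[OF P(1)] P(2) s mult_left_mono[of "P - 1" "P powr \<theta>" s]
        by (simp add: s_def algebra_simps)
      then have "y * ln y \<le> y * ((\<Phi> (xb + 1) + s) + s * P powr \<theta>)"
        using \<open>y > 0\<close> by (intro mult_left_mono) auto
      also have "\<dots> = (\<Phi> (xb + 1) + s) * y + s / a * (F_Phi \<Phi> xb \<theta> y - b)"
        using a False by (simp add: F P_def field_simps)
      also have "\<dots> \<le> \<bar>\<Phi> (xb + 1) + s\<bar> * y + s / a * (\<bar>F_Phi \<Phi> xb \<theta> y\<bar> + \<bar>b\<bar>)"
        using a s \<open>y > 0\<close> by (intro add_mono mult_right_mono mult_left_mono) auto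
      finally have "y * ln y \<le> s * \<bar>b\<bar> / a + \<bar>\<Phi> (xb + 1) + s\<bar> * y + s / a * \<bar>F_Phi \<Phi> xb \<theta> y\<bar>"
        by (simp add: algebra_simps)
      moreover have "y * ln y \<ge> 0"
        using \<open>y > 0\<close> \<open>ln y > t0\<close> Phi_xb_pos by (intro mult_nonneg_nonneg) linarith+
      ultimately show ?thesis
        using a s by (simp add: F_KL_def algebra_simps)
    qed
  qed (use a s in auto)
qed

lemma mult_Pinv_ln_powr_le:
  assumes "M > 0" "K > 0" "\<theta> \<ge> 0"
    and growth: "\<forall>\<^sub>F t in at_top. Pinv t \<le> K * exp (t / M)"
  obtains C where "C \<ge> 0"
    and "\<And>y. y > exp t0 \<Longrightarrow> y * Pinv (ln y) powr \<theta> \<le> C + K powr \<theta> * y powr (1 + \<theta> / M)"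
proof -
  obtain N where N: "\<And>t. t \<ge> N \<Longrightarrow> Pinv t \<le> K * exp (t / M)"
    using growth unfolding eventually_at_top_linorder by blast
  define T where "T = max N t0"
  define C where "C = exp T * Pinv T powr \<theta>"
  have "y * Pinv (ln y) powr \<theta> \<le> C + K powr \<theta> * y powr (1 + \<theta> / M)" if y: "y > exp t0" for y
  proof -
    have "y > 0"
      using y exp_gt_zero[of t0] by linarith
    then have "ln y > t0"
      using y ln_less_cancel_iff[of "exp t0" y] by simp
    define P where "P = Pinv (ln y)"
    have P: "P \<ge> xb"
      unfolding P_def using Pinv_ge \<open>ln y > t0\<close> by simp
    show ?thesis
    proof (cases "ln y \<ge> T")
      case True
      then have "P \<le> K * y powr (1 / M)"
        using N[of "ln y"] \<open>y > 0\<close> unfolding P_def T_def by (simp add: powr_def)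
      then have "P powr \<theta> \<le> (K * y powr (1 / M)) powr \<theta>"
        using P xb_pos assms by (intro powr_mono2) auto
      also have "\<dots> = K powr \<theta> * y powr (\<theta> / M)"
        using assms \<open>y > 0\<close> by (simp add: powr_mult powr_powr)
      finally have "y * P powr \<theta> \<le> K powr \<theta> * y powr (1 + \<theta> / M)"
        using mult_left_mono[of _ _ y] \<open>y > 0\<close> by (fastforce simp: powr_add)
      moreover have "C \<ge> 0"
        unfolding C_def by simp
      ultimately show ?thesis
        unfolding P_def by simp
    next
      case False
      then have "P \<le> Pinv T"
        unfolding P_def using \<open>ln y > t0\<close> by (intro Pinv_mono) auto
      then have "P powr \<theta> \<le> Pinv T powr \<theta>"
        using P xb_pos assms by (intro powr_mono2) auto
      moreover have "y \<le> exp T"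
        using False \<open>y > 0\<close> by (metis exp_ln exp_le_cancel_iff nle_le)
      ultimately have "y * P powr \<theta> \<le> C"
        unfolding C_def using \<open>y > 0\<close> by (intro mult_mono) auto
      then show ?thesis
        unfolding P_def by (smt (verit) assms(2) powr_ge_zero mult_nonneg_nonneg)
    qed
  qed
  moreover have "C \<ge> 0"
    unfolding C_def by simp
  ultimately show ?thesis
    using that by blast
qed

lemma F_Phi_affinely_dominated_powr:
  assumes "M > 0" "K > 0" "\<theta> \<ge> 0"
    and growth: "\<forall>\<^sub>F t in at_top. Pinv t \<le> K * exp (t / M)"
  shows "affinely_dominated (F_Phi \<Phi> xb \<theta>) (\<lambda>y. y powr (1 + \<theta> / M))"
proof -
  obtain a b where a: "a > 0" and F: "\<And>y. F_Phi \<Phi> xb \<theta> y =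
      (if y \<le> exp t0 then y * ln y else a * y * Pinv (ln y) powr \<theta> + b)"
    using F_Phi_shape[OF assms(3)] by blast
  obtain C where C: "C \<ge> 0"
    and le_C: "\<And>y. y > exp t0 \<Longrightarrow> y * Pinv (ln y) powr \<theta> \<le> C + K powr \<theta> * y powr (1 + \<theta> / M)"
    using mult_Pinv_ln_powr_le[OF assms] by blast
  show ?thesis
  proof (rule affinely_dominatedI)
    fix y :: real assume y: "y \<ge> 0"
    let ?c1 = "\<bar>b\<bar> + a * C + 1 + exp t0 * exp t0" and ?c3 = "a * K powr \<theta>"
    have nonneg: "0 \<le> ?c3 * y powr (1 + \<theta> / M)" "0 \<le> a * C" "0 \<le> exp t0 * exp t0"
      using a C by simp_all
    have "\<bar>F_Phi \<Phi> xb \<theta> y\<bar> \<le> ?c1 + ?c3 * y powr (1 + \<theta> / M)"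
    proof (cases "y \<le> exp t0")
      case True
      have "\<bar>y * ln y\<bar> \<le> 1 + exp t0 * exp t0"
        using abs_mult_ln_le[OF y] mult_mono[OF True True] y by simp
      then show ?thesis
        unfolding F if_P[OF True] using nonneg abs_ge_zero[of b] by linarith
    next
      case False
      define Q where "Q = a * (y * Pinv (ln y) powr \<theta>)"
      have "0 \<le> Q"
        unfolding Q_def using a y by simp
      moreover have "Q \<le> a * C + ?c3 * y powr (1 + \<theta> / M)"
        unfolding Q_def using mult_left_mono[OF le_C[of y], of a] False a
        by (simp add: algebra_simps)
      moreover have "F_Phi \<Phi> xb \<theta> y = Q + b"
        unfolding Q_def F using False by (simp add: mult.assoc)
      ultimately show ?thesis
        unfolding abs_le_iff using nonneg abs_ge_self[of b] abs_ge_minus_self[of b]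
        by (intro conjI) linarith+
    qed
    then show "\<bar>F_Phi \<Phi> xb \<theta> y\<bar> \<le> ?c1 + 0 * y + ?c3 * \<bar>y powr (1 + \<theta> / M)\<bar>"
      by simp
  qed (use a C in auto)
qed

lemma Pinv_le_exp:
  assumes "M > 0"
    and lower: "\<forall>\<^sub>F x in at_top. M * ln x \<le> \<phi> x"
    and upper: "\<forall>\<^sub>F x in at_top. \<phi> x \<in> \<Phi> ` {xb..} \<and> Pinv (\<phi> x) \<le> K * x"
  shows "\<forall>\<^sub>F t in at_top. Pinv t \<le> K * exp (t / M)"
proof -
  have "filterlim (\<lambda>t. inverse M * t) at_top at_top"
    using assms(1) by (intro filterlim_tendsto_pos_mult_at_top[OF tendsto_const] filterlim_ident) simp
  then have "filterlim (\<lambda>t. exp (t / M)) at_top at_top"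
    by (intro filterlim_compose[OF exp_at_top]) (simp add: divide_inverse mult.commute)
  then have "\<forall>\<^sub>F t in at_top. M * ln (exp (t / M)) \<le> \<phi> (exp (t / M)) \<and>
      \<phi> (exp (t / M)) \<in> \<Phi> ` {xb..} \<and> Pinv (\<phi> (exp (t / M))) \<le> K * exp (t / M)"
    using eventually_conj[OF lower upper] unfolding filterlim_iff by blast
  moreover have "\<forall>\<^sub>F t in at_top. t0 \<le> t"
    by (rule eventually_ge_at_top)
  ultimately show ?thesis
  proof eventually_elim
    case (elim t)
    then have "t \<le> \<phi> (exp (t / M))"
      using assms(1) by simp
    then have "Pinv t \<le> Pinv (\<phi> (exp (t / M)))"
      using elim by (intro Pinv_mono) auto
    then show ?case
      using elim by linarith
  qed
qed

end

lemma class_ii_ln_le_phi: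
  assumes "class_ii \<phi> \<Phi> xb"
  shows "\<forall>\<^sub>F x in at_top. M * ln x \<le> \<phi> x"
proof -
  have "\<forall>\<^sub>F x in at_top. M \<le> \<phi> x / ln x"
    using assms unfolding class_ii_def filterlim_at_top by blast
  moreover have "\<forall>\<^sub>F x in at_top. (1::real) < x"
    by (rule eventually_gt_at_top)
  ultimately show ?thesis
    by eventually_elim (simp add: field_simps)
qed

lemma class_ii_concave_profile:
  assumes "class_ii \<phi> \<Phi> xb"
  obtains D0 where "concave_profile \<Phi> xb D0"
proof -
  obtain \<Phi>' where deriv: "\<And>x. x \<ge> xb \<Longrightarrow> (\<Phi> has_real_derivative \<Phi>' x) (at x within {xb..})"
    using assms unfolding class_ii_def by blast
  have "continuous_on {xb..} \<Phi>"
    unfolding continuous_on_eq_continuous_within by (auto intro: DERIV_continuous[OF deriv])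
  moreover have "\<exists>x\<ge>xb. t \<le> \<Phi> x" for t
  proof -
    have "\<forall>\<^sub>F x in at_top. t \<le> ln x"
      using ln_at_top unfolding filterlim_at_top by blast
    moreover have "\<forall>\<^sub>F x in at_top. \<phi> x \<in> \<Phi> ` {xb..}"
      using assms by (simp add: class_ii_def)
    ultimately have "\<forall>\<^sub>F x in at_top. t \<le> \<phi> x \<and> \<phi> x \<in> \<Phi> ` {xb..}"
      using class_ii_ln_le_phi[OF assms, of 1] by eventually_elim auto
    then obtain x where "t \<le> \<phi> x" "\<phi> x \<in> \<Phi> ` {xb..}"
      using eventually_happens by force
    then show ?thesis by auto
  qed
  ultimately have "concave_profile \<Phi> xb (\<Phi>' xb)"
    using assms deriv[of xb] unfolding class_ii_def by unfold_locales auto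
  then show ?thesis ..
qed

lemma class_ii_Pinv_le_linear:
  assumes "class_ii \<phi> \<Phi> xb"
  obtains K where "K > 0"
    and "\<forall>\<^sub>F x in at_top. \<phi> x \<in> \<Phi> ` {xb..} \<and> Phi_inv \<Phi> xb (\<phi> x) \<le> K * x"
proof -
  have "Limsup at_top (\<lambda>x. ereal (Phi_inv \<Phi> xb (\<phi> x) / x)) \<noteq> \<infinity>"
    using assms by (simp add: class_ii_def)
  then obtain n :: nat where "Limsup at_top (\<lambda>x. ereal (Phi_inv \<Phi> xb (\<phi> x) / x)) < ereal n"
    unfolding less_PInf_Ex_of_nat by blast
  from Limsup_lessD[OF this] have "\<forall>\<^sub>F x in at_top. Phi_inv \<Phi> xb (\<phi> x) / x < n"
    by simp
  moreover have "\<forall>\<^sub>F x in at_top. (0::real) < x"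
    by (rule eventually_gt_at_top)
  moreover have "\<forall>\<^sub>F x in at_top. \<phi> x \<in> \<Phi> ` {xb..}"
    using assms by (simp add: class_ii_def)
  ultimately have "\<forall>\<^sub>F x in at_top. \<phi> x \<in> \<Phi> ` {xb..} \<and> Phi_inv \<Phi> xb (\<phi> x) \<le> (real n + 1) * x"
  proof eventually_elim
    case (elim x)
    then have "Phi_inv \<Phi> xb (\<phi> x) < n * x"
      by (simp add: divide_less_eq)
    with elim show ?case
      by (simp add: distrib_right)
  qed
  then show ?thesis
    using that[of "real n + 1"] by simp
qed

lemma set_integrable_dens_of:
  assumes "\<phi> \<in> borel_measurable borel" and "prob_space (nu_of \<phi>)"
  shows "set_integrable lborel {0..} (dens_of \<phi>)"
proof -
  have "(\<integral>\<^sup>+x. ennreal (indicator {0..} x * dens_of \<phi> x) \<partial>lborel) = emeasure (nu_of \<phi>) UNIV"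
    unfolding nu_of_def dens_of_def using assms(1) by (subst emeasure_density) auto
  also have "\<dots> = 1"
    using prob_space.emeasure_space_1[OF assms(2)] by (simp add: nu_of_def)
  finally show ?thesis
    unfolding set_integrable_def dens_of_def using assms(1)
    by (intro integrableI_nonneg) (auto simp: mult.commute)
qed

theorem proposition4p3:
  fixes \<phi> \<Phi> :: "real \<Rightarrow> real" and xb \<theta> :: real and \<eta> :: "real measure"
  assumes "\<phi> \<in> borel_measurable borel"
    and "prob_space (nu_of \<phi>)"
    and "prob_space \<eta>" and "sets \<eta> = sets borel" and "emeasure \<eta> {..<0} = 0"
    and "class_ii \<phi> \<Phi> xb"
    and "\<theta> > 1"
  shows "(fdiv (F_Phi \<Phi> xb \<theta>) \<eta> (dens_of \<phi>) < \<infinity> \<longrightarrow> fdiv F_KL \<eta> (dens_of \<phi>) < \<infinity>) \<and>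
         ((\<exists>\<alpha>>1. fdiv (F_alpha \<alpha>) \<eta> (dens_of \<phi>) < \<infinity>) \<longrightarrow>
            fdiv (F_Phi \<Phi> xb \<theta>) \<eta> (dens_of \<phi>) < \<infinity>)"
proof -
  obtain D0 where "concave_profile \<Phi> xb D0"
    using class_ii_concave_profile[OF assms(6)] .
  then interpret concave_profile \<Phi> xb D0 .
  note fdiv_transfer = fdiv_less_infinity_if_affinely_dominated[where f = "dens_of \<phi>",
      OF _ _ _ _ _ set_integrable_dens_of[OF assms(1,2)] assms(3,4)]
  have dens: "dens_of \<phi> \<in> borel_measurable borel" "\<And>x. dens_of \<phi> x > 0"
    unfolding dens_of_def using assms(1) by auto
  have F_Phi_meas: "F_Phi \<Phi> xb \<theta> \<in> borel_measurable borel"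
    using F_Phi_measurable assms(7) by simp
  have "F_KL \<in> borel_measurable borel"
    unfolding F_KL_def by measurable
  then have "fdiv F_KL \<eta> (dens_of \<phi>) < \<infinity>" if "fdiv (F_Phi \<Phi> xb \<theta>) \<eta> (dens_of \<phi>) < \<infinity>"
    using fdiv_transfer[OF that F_KL_affinely_dominated_F_Phi _ dens] assms(7) by simp
  moreover have "fdiv (F_Phi \<Phi> xb \<theta>) \<eta> (dens_of \<phi>) < \<infinity>"
    if \<alpha>: "\<alpha> > 1" and fin: "fdiv (F_alpha \<alpha>) \<eta> (dens_of \<phi>) < \<infinity>" for \<alpha>
  proof -
    define M where "M = \<theta> / (\<alpha> - 1)"
    have M: "M > 0" "1 + \<theta> / M = \<alpha>"
      using \<alpha> assms(7) by (auto simp: M_def)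
    obtain K where K: "K > 0"
      and "\<forall>\<^sub>F x in at_top. \<phi> x \<in> \<Phi> ` {xb..} \<and> Pinv (\<phi> x) \<le> K * x"
      using class_ii_Pinv_le_linear[OF assms(6)] by blast
    then have growth: "\<forall>\<^sub>F t in at_top. Pinv t \<le> K * exp (t / M)"
      by (intro Pinv_le_exp[OF M(1) class_ii_ln_le_phi[OF assms(6)]])
    have "affinely_dominated (F_Phi \<Phi> xb \<theta>) (\<lambda>y. y powr \<alpha>)"
      using F_Phi_affinely_dominated_powr[OF M(1) K _ growth, of \<theta>] assms(7)
      unfolding M(2) by simp
    then show ?thesis
      using fdiv_transfer[OF fin _ F_Phi_meas dens] affinely_dominated_trans
        powr_affinely_dominated_F_alpha[OF \<alpha>]
      by blast
  qed
  ultimately show ?thesis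
    by blast
qed

end
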